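(* Let $X$ be a topological space, $\Gamma$ a family of curves in $X$, $(\mathcal S_n)$ a sequence of finite covers of $X$, and $q>p\ge1$. Suppose there is a sequence $\eta_n>0$ tending to $0$ with $\sup_{s\in\mathcal S_n}\mathrm{mod}_q(\Gamma(s),\mathcal S_n)\le\eta_n$ for all $n$. Then $$\lim_{n\to\infty}\frac{\mathrm{mod}_q(\Gamma,\mathcal S_n)}{\mathrm{mod}_p(\Gamma,\mathcal S_n)}=0.$$
   Context: Combinatorial modulus: for a cover $\mathcal S$ and $p\ge1$, admissible metrics are $\rho:\mathcal S\to[0,\infty)$ with $0<\sum_s\rho(s)^p<\infty$; $\ell_\rho(K)=\sum_{s\in\mathcal S,\ s\cap K\ne\emptyset}\rho(s)$; $V_p(\rho)=\sum_s\rho(s)^p$; $L_\rho(\Gamma,\mathcal S)=\inf_{\gamma\in\Gamma}\ell_\rho(\gamma)$; $\mathrm{mod}_p(\Gamma,\mathcal S)=\inf_\rho V_p(\rho)/L_\rho(\Gamma,\mathcal S)^p$. $\Gamma(s)$ is the set of curves of $\Gamma$ meeting $s$. *)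

theory Defs
  imports "HOL-Analysis.Analysis"
begin

text \<open>Combinatorial modulus. A cover is a set S of subsets of the space; curves are
paths (continuous maps on [0,1]) and a curve meets a set s iff its image does.\<close>

definition is_cover :: "'a set set \<Rightarrow> bool" where
  "is_cover S \<longleftrightarrow> \<Union>S = UNIV"

definition curve_length :: "('a set \<Rightarrow> real) \<Rightarrow> 'a set set \<Rightarrow> 'a set \<Rightarrow> real" where
  "curve_length \<rho> S K = (\<Sum>s\<in>{s\<in>S. s \<inter> K \<noteq> {}}. \<rho> s)"

definition volume_p :: "real \<Rightarrow> ('a set \<Rightarrow> real) \<Rightarrow> 'a set set \<Rightarrow> real" where
  "volume_p p \<rho> S = (\<Sum>s\<in>S. \<rho> s powr p)"

definition admissible :: "real \<Rightarrow> 'a set set \<Rightarrow> ('a set \<Rightarrow> real) \<Rightarrow> bool" where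
  "admissible p S \<rho> \<longleftrightarrow> (\<forall>s\<in>S. 0 \<le> \<rho> s) \<and> 0 < volume_p p \<rho> S"

text \<open>Infimum over the family (infimum of the empty family is \<open>\<infinity>\<close>).\<close>
definition L_rho :: "('a set \<Rightarrow> real) \<Rightarrow> (real \<Rightarrow> 'a::topological_space) set \<Rightarrow> 'a set set \<Rightarrow> ereal" where
  "L_rho \<rho> \<Gamma> S = (INF \<gamma>\<in>\<Gamma>. ereal (curve_length \<rho> S (path_image \<gamma>)))"

definition mod_quot :: "real \<Rightarrow> real \<Rightarrow> ereal \<Rightarrow> ereal" where
  "mod_quot p V L = (if L = \<infinity> then 0 else if L = 0 then \<infinity>
                     else ereal (V / (real_of_ereal L) powr p))"

definition cmod :: "real \<Rightarrow> (real \<Rightarrow> 'a::topological_space) set \<Rightarrow> 'a set set \<Rightarrow> ereal" where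
  "cmod p \<Gamma> S = (INF \<rho>\<in>{\<rho>. admissible p S \<rho>}. mod_quot p (volume_p p \<rho> S) (L_rho \<rho> \<Gamma> S))"

definition curves_meeting :: "(real \<Rightarrow> 'a::topological_space) set \<Rightarrow> 'a set \<Rightarrow> (real \<Rightarrow> 'a) set" where
  "curves_meeting \<Gamma> s = {\<gamma>\<in>\<Gamma>. path_image \<gamma> \<inter> s \<noteq> {}}"

end

theory Submission
  imports Defs
begin

(* Call a metric rho on the cover S "curve admissible" for a family Gamma if it is
   nonnegative and every curve of Gamma has rho-length at least 1.  After dividing by the infimal
   length, mod_p(Gamma,S) is the infimum of V_p(rho) over such metrics (section 2).
   Main estimate (section 3): let rho be curve admissible, fix a threshold delta > 0 and, for every
   cell b, a metric sigma_b of q-volume at most eta' that is curve admissible for Gamma(b).  Keep rho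
   on the cells where rho < delta and take the pointwise maximum with sigma_b over the "big" cells
   b where rho b >= delta.  The result is curve admissible for Gamma (a curve meeting a big cell b
   is long for sigma_b, any other curve sees only small cells), and its q-volume is at most
   delta^(q-p) V_p(rho) + eta' * #big <= (delta^(q-p) + eta' / delta^p) V_p(rho), by Chebyshev.
   If every mod_q(Gamma(s),S) is at most eta, such sigma_b exist with eta' = 2 eta; the choice
   delta = eta^(1/q) then gives mod_q(Gamma,S) <= 3 eta^((q-p)/q) mod_p(Gamma,S) (section 4), and
   the corollary follows by a sandwich argument as eta_n -> 0. *)

lemma curve_length_nonneg: "\<forall>t\<in>S. 0 \<le> \<rho> t \<Longrightarrow> 0 \<le> curve_length \<rho> S K"
  unfolding curve_length_def by (rule sum_nonneg) auto

lemma curve_length_mono: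
  "\<forall>t\<in>{s\<in>S. s \<inter> K \<noteq> {}}. \<rho> t \<le> \<rho>' t \<Longrightarrow> curve_length \<rho> S K \<le> curve_length \<rho>' S K"
  unfolding curve_length_def by (rule sum_mono) auto

lemma L_rho_le_length: "\<gamma> \<in> \<Gamma> \<Longrightarrow> L_rho \<rho> \<Gamma> S \<le> ereal (curve_length \<rho> S (path_image \<gamma>))"
  unfolding L_rho_def by (rule INF_lower)

lemma L_rho_empty: "L_rho \<rho> {} S = \<infinity>"
  unfolding L_rho_def by (simp add: top_ereal_def)

lemma L_rho_nonneg: "\<forall>t\<in>S. 0 \<le> \<rho> t \<Longrightarrow> 0 \<le> L_rho \<rho> \<Gamma> S"
  unfolding L_rho_def by (rule INF_greatest) (simp add: curve_length_nonneg)

lemma L_rho_infinite_imp_empty: "L_rho \<rho> \<Gamma> S = \<infinity> \<Longrightarrow> \<Gamma> = {}"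
  using L_rho_le_length[of _ \<Gamma> \<rho> S] by fastforce

lemma curve_length_scale: "curve_length (\<lambda>t. \<rho> t / c) S K = curve_length \<rho> S K / c"
  unfolding curve_length_def by (simp add: sum_divide_distrib)

lemma volume_p_scale: "volume_p p (\<lambda>t. \<rho> t / c) S = volume_p p \<rho> S / c powr p"
  unfolding volume_p_def by (simp add: powr_divide sum_divide_distrib)

lemma cmod_nonneg: "0 \<le> cmod p \<Gamma> S"
  unfolding cmod_def admissible_def mod_quot_def
  by (rule INF_greatest) auto

section \<open>Curve admissible metrics\<close>

text \<open>A metric for which every curve of the family has length at least one.  The modulus is,
  up to the normalisation by the infimal length, the infimum of volumes of such metrics.\<close>
definition curve_admissible ::
  "'a set set \<Rightarrow> (real \<Rightarrow> 'a::topological_space) set \<Rightarrow> ('a set \<Rightarrow> real) \<Rightarrow> bool" where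
  "curve_admissible S \<Gamma> \<rho> \<longleftrightarrow>
     (\<forall>t\<in>S. 0 \<le> \<rho> t) \<and> (\<forall>\<gamma>\<in>\<Gamma>. 1 \<le> curve_length \<rho> S (path_image \<gamma>))"

lemma normalize_metric:
  assumes adm: "admissible p S \<rho>" and L: "L_rho \<rho> \<Gamma> S = ereal c" and c: "0 < c"
  shows "curve_admissible S \<Gamma> (\<lambda>t. \<rho> t / c)"
    and "mod_quot p (volume_p p \<rho> S) (L_rho \<rho> \<Gamma> S) = ereal (volume_p p (\<lambda>t. \<rho> t / c) S)"
proof -
  have "c \<le> curve_length \<rho> S (path_image \<gamma>)" if "\<gamma> \<in> \<Gamma>" for \<gamma>
    using L_rho_le_length[OF that, of \<rho> S] L by simp
  then show "curve_admissible S \<Gamma> (\<lambda>t. \<rho> t / c)"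
    using adm c by (auto simp: curve_admissible_def admissible_def curve_length_scale)
  show "mod_quot p (volume_p p \<rho> S) (L_rho \<rho> \<Gamma> S) = ereal (volume_p p (\<lambda>t. \<rho> t / c) S)"
    using L c by (simp add: mod_quot_def volume_p_scale)
qed

lemma cmod_le_volume:
  assumes fin: "finite S" and ne: "S \<noteq> {}" and q: "0 \<le> q"
    and \<rho>: "curve_admissible S \<Gamma> \<rho>"
  shows "cmod q \<Gamma> S \<le> ereal (volume_p q \<rho> S)"
proof (cases "\<Gamma> = {}")
  case True
  have "admissible q S (\<lambda>_. 1)"
    using fin ne by (simp add: admissible_def volume_p_def card_gt_0_iff)
  then have "cmod q \<Gamma> S \<le> mod_quot q (volume_p q (\<lambda>_. 1) S) (L_rho (\<lambda>_. 1) \<Gamma> S)"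
    unfolding cmod_def by (intro INF_lower) auto
  also have "\<dots> = 0" using True by (simp add: L_rho_empty mod_quot_def)
  moreover have "0 \<le> volume_p q \<rho> S"
    unfolding volume_p_def by (simp add: sum_nonneg)
  ultimately show ?thesis by (simp add: order_trans)
next
  case False
  then obtain \<gamma> where \<gamma>: "\<gamma> \<in> \<Gamma>" by blast
  have nn: "\<forall>t\<in>S. 0 \<le> \<rho> t" and len: "\<forall>\<gamma>\<in>\<Gamma>. 1 \<le> curve_length \<rho> S (path_image \<gamma>)"
    using \<rho> by (auto simp: curve_admissible_def)
  have "\<exists>t\<in>S. \<rho> t \<noteq> 0"
  proof (rule ccontr)
    assume "\<not> ?thesis"
    then have "curve_length \<rho> S (path_image \<gamma>) = 0" by (simp add: curve_length_def)
    then show False using len \<gamma> by fastforce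
  qed
  then obtain t where t: "t \<in> S" "0 < \<rho> t" using nn by force
  have "0 < volume_p q \<rho> S"
    unfolding volume_p_def using fin t by (intro sum_pos2[of S t]) auto
  then have adm: "admissible q S \<rho>" using nn by (simp add: admissible_def)
  have "1 \<le> L_rho \<rho> \<Gamma> S" unfolding L_rho_def using len by (intro INF_greatest) auto
  moreover have "L_rho \<rho> \<Gamma> S \<noteq> \<infinity>" using L_rho_infinite_imp_empty False by blast
  ultimately obtain l where l: "L_rho \<rho> \<Gamma> S = ereal l" "1 \<le> l"
    by (cases "L_rho \<rho> \<Gamma> S") auto
  have "cmod q \<Gamma> S \<le> mod_quot q (volume_p q \<rho> S) (L_rho \<rho> \<Gamma> S)"
    unfolding cmod_def using adm by (intro INF_lower) auto
  also have "\<dots> = ereal (volume_p q \<rho> S / l powr q)" using l by (simp add: mod_quot_def)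
  also have "\<dots> \<le> ereal (volume_p q \<rho> S)"
    using l q \<open>0 < volume_p q \<rho> S\<close> ge_one_powr_ge_zero[of l q] by (simp add: divide_le_eq)
  finally show ?thesis .
qed

lemma cmod_less_imp_curve_admissible:
  assumes less: "cmod p \<Gamma> S < ereal M" and M: "0 < M"
  shows "\<exists>\<rho>. curve_admissible S \<Gamma> \<rho> \<and> volume_p p \<rho> S < M"
proof -
  obtain \<rho> where adm: "admissible p S \<rho>"
    and lt: "mod_quot p (volume_p p \<rho> S) (L_rho \<rho> \<Gamma> S) < ereal M"
    using less unfolding cmod_def INF_less_iff by auto
  have "0 \<le> L_rho \<rho> \<Gamma> S" using adm L_rho_nonneg by (auto simp: admissible_def)
  then consider "L_rho \<rho> \<Gamma> S = \<infinity>" | "L_rho \<rho> \<Gamma> S = 0"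
    | c where "L_rho \<rho> \<Gamma> S = ereal c" "0 < c"
    by (cases "L_rho \<rho> \<Gamma> S") force+
  then show ?thesis
  proof cases
    case 1
    then have "curve_admissible S \<Gamma> (\<lambda>_. 0)"
      using L_rho_infinite_imp_empty by (auto simp: curve_admissible_def)
    then show ?thesis using M by (intro exI[of _ "\<lambda>_. 0"]) (simp add: volume_p_def)
  next
    case 2
    then show ?thesis using lt by (simp add: mod_quot_def)
  next
    case 3
    then show ?thesis using normalize_metric[OF adm 3] lt by auto
  qed
qed

lemma le_times_cmod:
  assumes C: "0 < C"
    and bound: "\<And>\<rho>. curve_admissible S \<Gamma> \<rho> \<Longrightarrow> x \<le> ereal (C * volume_p p \<rho> S)"
  shows "x \<le> ereal C * cmod p \<Gamma> S"
proof -
  have each: "ereal (1 / C) * x \<le> mod_quot p (volume_p p \<rho> S) (L_rho \<rho> \<Gamma> S)"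
    if adm: "admissible p S \<rho>" for \<rho>
  proof -
    have "0 \<le> L_rho \<rho> \<Gamma> S" using adm L_rho_nonneg by (auto simp: admissible_def)
    then consider "L_rho \<rho> \<Gamma> S = \<infinity>" | "L_rho \<rho> \<Gamma> S = 0"
      | c where "L_rho \<rho> \<Gamma> S = ereal c" "0 < c"
      by (cases "L_rho \<rho> \<Gamma> S") force+
    then show ?thesis
    proof cases
      case 1
      then have "curve_admissible S \<Gamma> (\<lambda>_. 0)"
        using L_rho_infinite_imp_empty by (auto simp: curve_admissible_def)
      from bound[OF this] have "x \<le> 0" by (simp add: volume_p_def zero_ereal_def)
      then show ?thesis using 1 C by (simp add: mod_quot_def ereal_mult_le_0_iff)
    next
      case 2
      then show ?thesis by (simp add: mod_quot_def)
    next
      case (3 c)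
      have "x \<le> ereal (C * volume_p p (\<lambda>t. \<rho> t / c) S)"
        using bound[OF normalize_metric(1)[OF adm 3]] .
      then have "ereal (1 / C) * x \<le> ereal (volume_p p (\<lambda>t. \<rho> t / c) S)"
        using C by (cases x) (auto simp: field_simps)
      then show ?thesis using normalize_metric(2)[OF adm 3] by simp
    qed
  qed
  have "ereal (1 / C) * x \<le> cmod p \<Gamma> S"
    unfolding cmod_def using each by (intro INF_greatest) auto
  then have "ereal C * (ereal (1 / C) * x) \<le> ereal C * cmod p \<Gamma> S"
    using C by (intro ereal_mult_left_mono) auto
  then show ?thesis using C by (simp add: mult.assoc[symmetric])
qed

section \<open>Refining a metric on the big cells\<close>

text \<open>The cells where the metric reaches the threshold \<open>\<delta>\<close>; by Chebyshev there are few.\<close>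
definition big_cells :: "'a set set \<Rightarrow> real \<Rightarrow> ('a set \<Rightarrow> real) \<Rightarrow> 'a set set" where
  "big_cells S \<delta> \<rho> = {b\<in>S. \<delta> \<le> \<rho> b}"

definition truncate_metric :: "real \<Rightarrow> ('a set \<Rightarrow> real) \<Rightarrow> 'a set \<Rightarrow> real" where
  "truncate_metric \<delta> \<rho> t = (if \<rho> t < \<delta> then \<rho> t else 0)"

definition refined_metric ::
  "'a set set \<Rightarrow> real \<Rightarrow> ('a set \<Rightarrow> real) \<Rightarrow> ('a set \<Rightarrow> 'a set \<Rightarrow> real) \<Rightarrow> 'a set \<Rightarrow> real" where
  "refined_metric S \<delta> \<rho> \<sigma> t =
     Max (insert (truncate_metric \<delta> \<rho> t) ((\<lambda>b. \<sigma> b t) ` big_cells S \<delta> \<rho>))"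

lemma refined_metric_ge:
  assumes "finite S"
  shows "truncate_metric \<delta> \<rho> t \<le> refined_metric S \<delta> \<rho> \<sigma> t"
    and "b \<in> big_cells S \<delta> \<rho> \<Longrightarrow> \<sigma> b t \<le> refined_metric S \<delta> \<rho> \<sigma> t"
  using assms by (simp_all add: refined_metric_def big_cells_def)

lemma Max_powr_le_sum:
  fixes a :: real
  assumes "finite B" "0 \<le> a" "\<forall>b\<in>B. 0 \<le> f b"
  shows "Max (insert a (f ` B)) powr q \<le> a powr q + (\<Sum>b\<in>B. f b powr q)"
proof -
  have "Max (insert a (f ` B)) \<in> insert a (f ` B)" using assms(1) by (intro Max_in) auto
  then show ?thesis
  proof
    assume "Max (insert a (f ` B)) = a"
    moreover have "0 \<le> (\<Sum>b\<in>B. f b powr q)" by (simp add: sum_nonneg)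
    ultimately show ?thesis by simp
  next
    assume "Max (insert a (f ` B)) \<in> f ` B"
    then obtain b where b: "b \<in> B" "Max (insert a (f ` B)) = f b" by auto
    have "f b powr q \<le> (\<Sum>b\<in>B. f b powr q)"
      using b assms by (intro member_le_sum) auto
    then show ?thesis using b by (smt (verit) powr_ge_zero)
  qed
qed

text \<open>The refined metric is curve admissible: a curve meeting a big cell \<open>b\<close> is long for
  \<open>\<sigma> b\<close>, and a curve meeting only small cells is measured by the untouched values of \<open>\<rho>\<close>.\<close>
lemma refined_metric_curve_admissible:
  assumes fin: "finite S" and \<rho>: "curve_admissible S \<Gamma> \<rho>"
    and \<sigma>: "\<forall>b\<in>S. curve_admissible S (curves_meeting \<Gamma> b) (\<sigma> b)"
  shows "curve_admissible S \<Gamma> (refined_metric S \<delta> \<rho> \<sigma>)"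
  unfolding curve_admissible_def
proof (intro conjI ballI)
  fix t assume "t \<in> S"
  then show "0 \<le> refined_metric S \<delta> \<rho> \<sigma> t"
    using \<rho> refined_metric_ge(1)[OF fin, of \<delta> \<rho> t \<sigma>]
    by (force simp: curve_admissible_def truncate_metric_def split: if_splits)
next
  fix \<gamma> assume \<gamma>: "\<gamma> \<in> \<Gamma>"
  show "1 \<le> curve_length (refined_metric S \<delta> \<rho> \<sigma>) S (path_image \<gamma>)"
  proof (cases "\<exists>b\<in>big_cells S \<delta> \<rho>. path_image \<gamma> \<inter> b \<noteq> {}")
    case True
    then obtain b where b: "b \<in> big_cells S \<delta> \<rho>" "path_image \<gamma> \<inter> b \<noteq> {}" by blast
    then have "1 \<le> curve_length (\<sigma> b) S (path_image \<gamma>)"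
      using \<sigma> \<gamma> by (auto simp: big_cells_def curve_admissible_def curves_meeting_def)
    also have "\<dots> \<le> curve_length (refined_metric S \<delta> \<rho> \<sigma>) S (path_image \<gamma>)"
      using refined_metric_ge(2)[OF fin b(1)] by (intro curve_length_mono) auto
    finally show ?thesis .
  next
    case False
    have "1 \<le> curve_length \<rho> S (path_image \<gamma>)" using \<rho> \<gamma> by (auto simp: curve_admissible_def)
    also have "\<dots> \<le> curve_length (refined_metric S \<delta> \<rho> \<sigma>) S (path_image \<gamma>)"
    proof (intro curve_length_mono ballI)
      fix t assume "t \<in> {s \<in> S. s \<inter> path_image \<gamma> \<noteq> {}}"
      then have "\<rho> t = truncate_metric \<delta> \<rho> t"
        using False by (force simp: big_cells_def truncate_metric_def)
      then show "\<rho> t \<le> refined_metric S \<delta> \<rho> \<sigma> t" using refined_metric_ge(1)[OF fin] by simp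
    qed
    finally show ?thesis .
  qed
qed

lemma truncate_metric_powr_le:
  assumes "0 \<le> \<rho> t" and "p \<le> q"
  shows "truncate_metric \<delta> \<rho> t powr q \<le> \<delta> powr (q - p) * \<rho> t powr p"
proof (cases "\<rho> t < \<delta>")
  case True
  have "truncate_metric \<delta> \<rho> t powr q = \<rho> t powr p * \<rho> t powr (q - p)"
    using True by (simp add: truncate_metric_def flip: powr_add)
  also have "\<dots> \<le> \<rho> t powr p * \<delta> powr (q - p)"
    using True assms by (intro mult_left_mono powr_mono2) auto
  finally show ?thesis by (simp add: mult.commute)
next
  case False
  then show ?thesis by (simp add: truncate_metric_def)
qed

lemma card_big_cells_le:
  assumes "finite S" and "0 < \<delta>" and "0 \<le> p"
  shows "real (card (big_cells S \<delta> \<rho>)) * \<delta> powr p \<le> volume_p p \<rho> S"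
proof -
  have "real (card (big_cells S \<delta> \<rho>)) * \<delta> powr p = (\<Sum>t\<in>big_cells S \<delta> \<rho>. \<delta> powr p)" by simp
  also have "\<dots> \<le> (\<Sum>t\<in>big_cells S \<delta> \<rho>. \<rho> t powr p)"
    using assms by (intro sum_mono powr_mono2) (auto simp: big_cells_def)
  also have "\<dots> \<le> (\<Sum>t\<in>S. \<rho> t powr p)"
    using assms(1) by (intro sum_mono2) (auto simp: big_cells_def)
  finally show ?thesis by (simp add: volume_p_def)
qed

lemma refined_metric_volume_le:
  assumes fin: "finite S" and \<delta>: "0 < \<delta>" and pq: "0 \<le> p" "p \<le> q" and \<eta>: "0 \<le> \<eta>"
    and nn: "\<forall>t\<in>S. 0 \<le> \<rho> t"
    and \<sigma>: "\<forall>b\<in>S. (\<forall>t\<in>S. 0 \<le> \<sigma> b t) \<and> volume_p q (\<sigma> b) S \<le> \<eta>"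
  shows "volume_p q (refined_metric S \<delta> \<rho> \<sigma>) S
           \<le> (\<delta> powr (q - p) + \<eta> / \<delta> powr p) * volume_p p \<rho> S"
proof -
  let ?B = "big_cells S \<delta> \<rho>" and ?W = "volume_p p \<rho> S"
  have finB: "finite ?B" and subB: "?B \<subseteq> S" using fin by (auto simp: big_cells_def)
  have "volume_p q (refined_metric S \<delta> \<rho> \<sigma>) S
          \<le> (\<Sum>t\<in>S. truncate_metric \<delta> \<rho> t powr q + (\<Sum>b\<in>?B. \<sigma> b t powr q))"
    unfolding volume_p_def refined_metric_def using finB subB nn \<sigma>
    by (intro sum_mono Max_powr_le_sum) (auto simp: truncate_metric_def)
  also have "\<dots> = (\<Sum>t\<in>S. truncate_metric \<delta> \<rho> t powr q) + (\<Sum>b\<in>?B. volume_p q (\<sigma> b) S)"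
    unfolding volume_p_def by (simp add: sum.distrib sum.swap[of _ S])
  also have "\<dots> \<le> (\<Sum>t\<in>S. \<delta> powr (q - p) * \<rho> t powr p) + (\<Sum>b\<in>?B. \<eta>)"
    using truncate_metric_powr_le[of \<rho> _ p q \<delta>] nn pq \<sigma> subB
    by (intro add_mono sum_mono) auto
  also have "\<dots> = \<delta> powr (q - p) * ?W + real (card ?B) * \<eta>"
    by (simp add: volume_p_def sum_distrib_left)
  also have "\<dots> \<le> \<delta> powr (q - p) * ?W + ?W / \<delta> powr p * \<eta>"
    using card_big_cells_le[OF fin \<delta> pq(1), of \<rho>] \<delta> \<eta>
    by (intro add_left_mono mult_right_mono) (auto simp: field_simps)
  also have "\<dots> = (\<delta> powr (q - p) + \<eta> / \<delta> powr p) * ?W" by (simp add: algebra_simps)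
  finally show ?thesis .
qed

section \<open>Comparison of moduli of different exponents\<close>

text \<open>With the threshold \<open>\<delta> = \<eta>^(1/q)\<close> both terms of the constant have the same order.\<close>
lemma threshold_constant:
  fixes \<eta> q p :: real
  assumes "0 < \<eta>" and "0 < q"
  shows "(\<eta> powr (1/q)) powr (q - p) + 2 * \<eta> / (\<eta> powr (1/q)) powr p = 3 * \<eta> powr ((q - p) / q)"
proof -
  have "2 * \<eta> / (\<eta> powr (1/q)) powr p = 2 * (\<eta> powr 1 / \<eta> powr (p / q))"
    using assms by (simp add: powr_powr)
  also have "\<dots> = 2 * \<eta> powr ((q - p) / q)"
    using assms by (simp add: powr_diff diff_divide_distrib)
  finally show ?thesis by (simp add: powr_powr diff_divide_distrib)
qed

theorem cmod_le_small_times_cmod: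
  fixes \<Gamma> :: "(real \<Rightarrow> 'a::topological_space) set"
  assumes fin: "finite S" and ne: "S \<noteq> {}" and pq: "0 \<le> p" "p < q" and \<eta>: "0 < \<eta>"
    and local: "\<forall>s\<in>S. cmod q (curves_meeting \<Gamma> s) S \<le> ereal \<eta>"
  shows "cmod q \<Gamma> S \<le> ereal (3 * \<eta> powr ((q - p) / q)) * cmod p \<Gamma> S"
proof -
  define \<delta> where "\<delta> = \<eta> powr (1/q)"
  have \<delta>: "0 < \<delta>" using \<eta> by (simp add: \<delta>_def)
  have "\<forall>s\<in>S. \<exists>\<sigma>. curve_admissible S (curves_meeting \<Gamma> s) \<sigma> \<and> volume_p q \<sigma> S < 2 * \<eta>"
    using local \<eta> by (intro ballI cmod_less_imp_curve_admissible) (auto intro: le_less_trans)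
  then obtain \<sigma> where \<sigma>: "\<forall>s\<in>S. curve_admissible S (curves_meeting \<Gamma> s) (\<sigma> s)"
    and vol\<sigma>: "\<forall>s\<in>S. volume_p q (\<sigma> s) S < 2 * \<eta>"
    by metis
  show ?thesis
  proof (rule le_times_cmod)
    show "0 < 3 * \<eta> powr ((q - p) / q)" using \<eta> by simp
  next
    fix \<rho> assume \<rho>: "curve_admissible S \<Gamma> \<rho>"
    have "cmod q \<Gamma> S \<le> ereal (volume_p q (refined_metric S \<delta> \<rho> \<sigma>) S)"
      using pq by (intro cmod_le_volume[OF fin ne] refined_metric_curve_admissible[OF fin \<rho> \<sigma>]) auto
    also have "\<dots> \<le> ereal ((\<delta> powr (q - p) + 2 * \<eta> / \<delta> powr p) * volume_p p \<rho> S)"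
      using \<rho> \<sigma> vol\<sigma> \<eta> pq
      by (subst ereal_less_eq(3), intro refined_metric_volume_le[OF fin \<delta>])
         (auto simp: curve_admissible_def less_imp_le)
    also have "\<dots> = ereal (3 * \<eta> powr ((q - p) / q) * volume_p p \<rho> S)"
      using threshold_constant[OF \<eta>, of q p] pq by (simp add: \<delta>_def)
    finally show "cmod q \<Gamma> S \<le> ereal (3 * \<eta> powr ((q - p) / q) * volume_p p \<rho> S)" .
  qed
qed

lemma ereal_quotient_tendsto_zero:
  fixes x m :: "nat \<Rightarrow> ereal"
  assumes nonneg: "\<And>n. 0 \<le> x n" "\<And>n. 0 \<le> m n" and C: "\<And>n. 0 < C n" "C \<longlonglongrightarrow> 0"
    and bound: "\<And>n. x n \<le> ereal (C n) * m n"
  shows "(\<lambda>n. x n / m n) \<longlonglongrightarrow> 0"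
proof (rule tendsto_sandwich[OF _ _ tendsto_const])
  have "0 \<le> x n / m n" for n
    using nonneg[of n] by (cases "x n"; cases "m n") (auto simp: divide_ereal_def)
  then show "\<forall>\<^sub>F n in sequentially. 0 \<le> x n / m n" by simp
  have "x n / m n \<le> ereal (C n)" for n
    using nonneg[of n] C(1)[of n] bound[of n]
    by (cases "x n"; cases "m n") (auto simp: ereal_divide_eq divide_le_eq mult.commute split: if_splits)
  then show "\<forall>\<^sub>F n in sequentially. x n / m n \<le> ereal (C n)" by simp
  show "(\<lambda>n. ereal (C n)) \<longlonglongrightarrow> 0" using C(2) by (simp add: zero_ereal_def tendsto_ereal)
qed

theorem corollary4p10:
  fixes \<Gamma> :: "(real \<Rightarrow> 'a::topological_space) set"
    and S :: "nat \<Rightarrow> 'a set set"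
    and p q :: real
    and \<eta> :: "nat \<Rightarrow> real"
  assumes curves: "\<forall>\<gamma>\<in>\<Gamma>. path \<gamma>"
    and covers: "\<forall>n. finite (S n) \<and> is_cover (S n)"
    and pq: "1 \<le> p" "p < q"
    and eta_pos: "\<forall>n. 0 < \<eta> n"
    and eta_lim: "\<eta> \<longlonglongrightarrow> 0"
    and bound: "\<forall>n. (SUP s\<in>S n. cmod q (curves_meeting \<Gamma> s) (S n)) \<le> ereal (\<eta> n)"
  shows "(\<lambda>n. cmod q \<Gamma> (S n) / cmod p \<Gamma> (S n)) \<longlonglongrightarrow> 0"
proof (rule ereal_quotient_tendsto_zero[OF cmod_nonneg cmod_nonneg])
  define C where "C = (\<lambda>n. 3 * \<eta> n powr ((q - p) / q))"
  show "0 < C n" for n using eta_pos[rule_format, of n] by (simp add: C_def)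
  have "(\<lambda>n. \<eta> n powr ((q - p) / q)) \<longlonglongrightarrow> 0 powr ((q - p) / q)"
    using eta_pos pq by (intro tendsto_powr'[OF eta_lim tendsto_const]) (auto simp: less_imp_le)
  then show "C \<longlonglongrightarrow> 0"
    using pq tendsto_mult_left[of _ 0 sequentially 3] by (simp add: C_def)
  fix n
  have "\<forall>s\<in>S n. cmod q (curves_meeting \<Gamma> s) (S n) \<le> ereal (\<eta> n)"
    using bound by (meson SUP_upper order_trans)
  moreover have "finite (S n)" "S n \<noteq> {}" using covers by (auto simp: is_cover_def)
  ultimately show "cmod q \<Gamma> (S n) \<le> ereal (C n) * cmod p \<Gamma> (S n)"
    using pq eta_pos unfolding C_def by (intro cmod_le_small_times_cmod) auto
qed

end
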